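(* Let $I$ be a finite set of positive integers and $m=\max(I\cup\{0\})$. Then $(-1)^m d(I;-1)\ge 0$. Equivalently, if $d(I;n)=\sum_{k=0}^m(-1)^{m-k}c_k(I)\binom{n+1}{k}$ is the expansion of the descent polynomial in the basis $\{\binom{n+1}{k}\}_{k\ge 0}$, then $c_0(I)\ge 0$.
   Context: For $n>m$, $d(I;n)$ is the number of permutations $\pi\in\mathfrak S_n$ with $\{i\mid\pi_i>\pi_{i+1}\}=I$; it is a polynomial in $n$ of degree $m$, extended to all complex arguments, and $d(I;-1)$ is its value at $-1$ (note $d(I;-1)=(-1)^m c_0(I)$). *)

theory Defs
  imports "HOL-Combinatorics.Permutations" "HOL-Computational_Algebra.Polynomial"
begin

definition descent_set :: "nat \<Rightarrow> (nat \<Rightarrow> nat) \<Rightarrow> nat set" where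
  "descent_set n \<pi> = {i \<in> {1..<n}. \<pi> i > \<pi> (Suc i)}"

definition dcount :: "nat set \<Rightarrow> nat \<Rightarrow> nat" where
  "dcount I n = card {\<pi>. \<pi> permutes {1..n} \<and> descent_set n \<pi> = I}"

definition descent_poly :: "nat set \<Rightarrow> real poly" where
  "descent_poly I = (THE p. \<forall>n > Max (I \<union> {0}). poly p (real n) = real (dcount I n))"

end

theory Submission
  imports Defs "HOL-Library.Infinite_Set"
begin

text \<open>
  Let \<open>m = max I\<close>, \<open>J = I - {m}\<close> and \<open>m' = max (J \<union> {0})\<close>. Counting the arrangements of
  \<open>{1..n}\<close> whose entries after position \<open>m\<close> increase gives \<open>d(I;n) + d(J;n) = C(n,m) d(J;m)\<close>,
  so the descent polynomial of \<open>I\<close> is \<open>d(J;m) C(x,m)\<close> minus that of \<open>J\<close>, and since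
  \<open>C(-1,m) = (-1)^m\<close>,
  \<open>(-1)^m d(I;-1) = d(J;m) - (-1)^(m-m') (-1)^m' d(J;-1)\<close>.
  The claim then follows by induction on \<open>I\<close> once it is strengthened to
  \<open>0 \<le> (-1)^m d(I;-1) \<le> d(I;m+2)\<close>: if \<open>m - m'\<close> is even, the subtracted term is at most
  \<open>d(J;m'+2) \<le> d(J;m)\<close>; if it is odd, the added term is at most \<open>d(J;m+1) \<le> m d(J;m)\<close>;
  and \<open>d(I;m+2) \<ge> (m+1) d(J;m)\<close>.
\<close>

definition descents :: "'a::linorder list \<Rightarrow> nat set" where
  "descents xs = {i. 0 < i \<and> i < length xs \<and> xs ! i < xs ! (i - 1)}"

definition arrangements :: "'a::linorder set \<Rightarrow> nat set \<Rightarrow> 'a list set" where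
  "arrangements A D = {xs. distinct xs \<and> set xs = A \<and> descents xs = D}"

lemma descents_map_strict_mono:
  assumes "strict_mono_on A f" "set xs \<subseteq> A"
  shows "descents (map f xs) = descents xs"
proof -
  have "f (xs ! i) < f (xs ! (i - 1)) \<longleftrightarrow> xs ! i < xs ! (i - 1)" if "i < length xs" for i
  proof -
    have "xs ! i \<in> A" "xs ! (i - 1) \<in> A"
      using that assms(2) by auto
    then show ?thesis
      using assms(1) by (metis strict_mono_on_less)
  qed
  then show ?thesis
    unfolding descents_def by auto
qed

lemma descents_take:
  "m \<le> length xs \<Longrightarrow> descents (take m xs) = descents xs \<inter> {..<m}"
  by (auto simp: descents_def)

lemma descents_drop:
  assumes "m \<le> length xs"
  shows "i \<in> descents (drop m xs) \<longleftrightarrow> 0 < i \<and> i + m \<in> descents xs"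
proof -
  have "drop m xs ! (i - 1) = xs ! (i + m - 1)" if "0 < i" "i < length xs - m"
    using that by (simp add: nth_drop add.commute)
  moreover have "drop m xs ! i = xs ! (i + m)" if "i < length xs - m"
    using that by (simp add: nth_drop add.commute)
  ultimately show ?thesis
    unfolding descents_def using assms by auto
qed

lemma descents_empty_iff_sorted: "descents xs = {} \<longleftrightarrow> sorted xs"
proof -
  have "descents xs = {} \<longleftrightarrow> (\<forall>i. Suc i < length xs \<longrightarrow> xs ! i \<le> xs ! Suc i)"
  proof
    assume none: "descents xs = {}"
    show "\<forall>i. Suc i < length xs \<longrightarrow> xs ! i \<le> xs ! Suc i"
    proof (intro allI impI)
      fix i assume "Suc i < length xs"
      then have "\<not> xs ! Suc i < xs ! i"
        using none by (auto simp: descents_def)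
      then show "xs ! i \<le> xs ! Suc i"
        by simp
    qed
  next
    assume "\<forall>i. Suc i < length xs \<longrightarrow> xs ! i \<le> xs ! Suc i"
    then show "descents xs = {}"
      unfolding descents_def by (auto simp: not_less gr0_conv_Suc)
  qed
  then show ?thesis
    by (simp add: sorted_iff_nth_Suc)
qed

lemma descents_append_greater:
  assumes "\<forall>x\<in>set xs. x < a"
  shows "descents (xs @ [a]) = descents xs"
proof -
  have "xs ! (length xs - 1) < a" if "length xs - 1 < length xs"
    using assms that by simp
  then show ?thesis
    unfolding descents_def by (auto simp: nth_append less_Suc_eq dest: order.asym)
qed

lemma descents_split:
  assumes "J \<subseteq> {..<m}" and "m \<le> length xs"
  shows "descents (take m xs) = J \<and> sorted (drop m xs)
    \<longleftrightarrow> descents xs = insert m J \<or> descents xs = J"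
proof -
  have "sorted (drop m xs) \<longleftrightarrow> descents (drop m xs) = {}"
    by (simp add: descents_empty_iff_sorted)
  also have "\<dots> \<longleftrightarrow> descents xs \<subseteq> {..m}"
  proof
    assume none: "descents (drop m xs) = {}"
    show "descents xs \<subseteq> {..m}"
    proof
      fix k assume "k \<in> descents xs"
      with none descents_drop[OF assms(2), of "k - m"] show "k \<in> {..m}"
        by (cases "m < k") auto
    qed
  next
    assume "descents xs \<subseteq> {..m}"
    then show "descents (drop m xs) = {}"
      using descents_drop[OF assms(2)] by fastforce
  qed
  finally have "sorted (drop m xs) \<longleftrightarrow> descents xs \<subseteq> {..m}" .
  moreover have "descents xs \<inter> {..<m} = J \<and> descents xs \<subseteq> {..m}
      \<longleftrightarrow> descents xs = insert m J \<or> descents xs = J"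
  proof
    assume "descents xs \<inter> {..<m} = J \<and> descents xs \<subseteq> {..m}"
    moreover have "descents xs \<subseteq> {..m} \<Longrightarrow> descents xs = (descents xs \<inter> {..<m}) \<union> (descents xs \<inter> {m})"
      by (auto simp: nat_less_le)
    ultimately show "descents xs = insert m J \<or> descents xs = J"
      by (cases "m \<in> descents xs") auto
  next
    assume "descents xs = insert m J \<or> descents xs = J"
    then show "descents xs \<inter> {..<m} = J \<and> descents xs \<subseteq> {..m}"
      using assms(1) by auto
  qed
  ultimately show ?thesis
    using descents_take[OF assms(2)] by simp
qed

lemma strict_mono_on_inv_into:
  fixes f :: "'a::linorder \<Rightarrow> 'b::linorder"
  assumes "strict_mono_on A f" "bij_betw f A B"
  shows "strict_mono_on B (inv_into A f)"
proof (rule strict_mono_onI)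
  fix x y assume "x \<in> B" "y \<in> B" "x < y"
  then obtain a b where "a \<in> A" "b \<in> A" "x = f a" "y = f b"
    using assms(2) by (auto simp: bij_betw_def)
  moreover have "\<not> b \<le> a"
    using assms(1) \<open>x < y\<close> calculation by (metis leD order_le_less strict_mono_on_less)
  ultimately show "inv_into A f x < inv_into A f y"
    using assms(2) by (auto simp: bij_betw_def inv_into_f_f)
qed

lemma ex_strict_mono_bij_betw:
  fixes A :: "'a::wellorder set" and B :: "'b::wellorder set"
  assumes "finite A" "finite B" "card A = card B"
  obtains f where "strict_mono_on A f" "bij_betw f A B"
proof -
  obtain g where g: "bij_betw g {..<card A} A" "strict_mono_on {..<card A} g"
    using ex_bij_betw_strict_mono_card[OF assms(1)] by blast
  obtain h where h: "bij_betw h {..<card A} B" "strict_mono_on {..<card A} h"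
    using ex_bij_betw_strict_mono_card[OF assms(2)] assms(3) by metis
  have g': "bij_betw (inv_into {..<card A} g) A {..<card A}" "strict_mono_on A (inv_into {..<card A} g)"
    using g bij_betw_inv_into strict_mono_on_inv_into by blast+
  show ?thesis
  proof
    show "bij_betw (h \<circ> inv_into {..<card A} g) A B"
      using g'(1) h(1) by (rule bij_betw_trans)
    show "strict_mono_on A (h \<circ> inv_into {..<card A} g)"
    proof (rule strict_mono_onI)
      fix x y assume "x \<in> A" "y \<in> A" "x < y"
      then have "inv_into {..<card A} g x < inv_into {..<card A} g y"
        "inv_into {..<card A} g x \<in> {..<card A}" "inv_into {..<card A} g y \<in> {..<card A}"
        using g' bij_betw_apply[OF g'(1)] by (simp_all add: strict_mono_on_less)
      then show "(h \<circ> inv_into {..<card A} g) x < (h \<circ> inv_into {..<card A} g) y"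
        using h(2) by (simp add: strict_mono_on_less)
    qed
  qed
qed

lemma card_arrangements_eq:
  fixes A :: "'a::wellorder set" and B :: "'b::wellorder set"
  assumes "finite A" "finite B" "card A = card B"
  shows "card (arrangements A D) = card (arrangements B D)"
proof -
  obtain f where f: "strict_mono_on A f" "bij_betw f A B"
    using ex_strict_mono_bij_betw assms by blast
  let ?g = "inv_into A f"
  have g: "strict_mono_on B ?g" "bij_betw ?g B A"
    using strict_mono_on_inv_into f bij_betw_inv_into by blast+
  show ?thesis
  proof (rule bij_betw_same_card[of "map f"], rule bij_betw_byWitness[where f' = "map ?g"])
    show "\<forall>xs\<in>arrangements A D. map ?g (map f xs) = xs"
      using f(2) by (auto simp: arrangements_def bij_betw_def map_idI inv_into_f_f)
    show "\<forall>ys\<in>arrangements B D. map f (map ?g ys) = ys"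
    proof
      fix ys assume "ys \<in> arrangements B D"
      then have "set ys \<subseteq> f ` A"
        using f(2) by (auto simp: arrangements_def bij_betw_def)
      then show "map f (map ?g ys) = ys"
        by (induction ys) (auto simp: f_inv_into_f)
    qed
    show "map f ` arrangements A D \<subseteq> arrangements B D"
      using f by (auto simp: arrangements_def bij_betw_def distinct_map descents_map_strict_mono inj_on_subset)
    show "map ?g ` arrangements B D \<subseteq> arrangements A D"
      using g by (auto simp: arrangements_def bij_betw_def distinct_map descents_map_strict_mono inj_on_subset)
  qed
qed

lemma length_arrangements: "xs \<in> arrangements A D \<Longrightarrow> length xs = card A"
  by (auto simp: arrangements_def distinct_card)

lemma finite_arrangements: "finite A \<Longrightarrow> finite (arrangements A D)"
proof -
  assume "finite A"
  then have "finite {xs. set xs \<subseteq> A \<and> length xs \<le> card A}"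
    by (rule finite_lists_length_le)
  moreover have "arrangements A D \<subseteq> {xs. set xs \<subseteq> A \<and> length xs \<le> card A}"
    by (auto simp: arrangements_def distinct_card)
  ultimately show ?thesis
    by (rule finite_subset[rotated])
qed

lemma card_distinct_lists_descents:
  fixes B :: "'a::wellorder set"
  assumes "finite B"
  shows "card {ys. distinct ys \<and> length ys = m \<and> set ys \<subseteq> B \<and> descents ys = J}
    = (card B choose m) * card (arrangements {1..m} J)"
proof -
  let ?S = "{A. A \<subseteq> B \<and> card A = m}"
  have "{ys. distinct ys \<and> length ys = m \<and> set ys \<subseteq> B \<and> descents ys = J}
      = (\<Union>A\<in>?S. arrangements A J)"
    by (auto simp: arrangements_def distinct_card)
  moreover have "finite (arrangements A J)" if "A \<in> ?S" for A
    using that assms by (intro finite_arrangements) (auto intro: finite_subset)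
  then have "card (\<Union>A\<in>?S. arrangements A J) = (\<Sum>A\<in>?S. card (arrangements A J))"
    using assms by (intro card_UN_disjoint) (auto simp: arrangements_def)
  moreover have "card (arrangements A J) = card (arrangements {1..m} J)" if "A \<in> ?S" for A
    using that assms finite_subset by (intro card_arrangements_eq) auto
  ultimately show ?thesis
    using n_subsets[OF assms, of m] by simp
qed

lemma descents_map_upt: "descents (map \<pi> [1..<Suc n]) = descent_set n \<pi>"
  unfolding descents_def descent_set_def by (auto simp: nth_map Suc_le_eq simp del: upt_Suc)

lemma permutes_nth_shift:
  assumes "distinct xs" "set xs = {1..n}"
  shows "(\<lambda>x. if x \<in> {1..n} then xs ! (x - 1) else x) permutes {1..n}"
proof -
  have "length xs = n"
    using assms distinct_card by fastforce
  then have "bij_betw (\<lambda>i. xs ! i) {..<n} {1..n}"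
    using assms by (simp add: bij_betw_nth)
  moreover have "bij_betw (\<lambda>x. x - 1) {1..n} {..<n}"
    by (rule bij_betwI[where g = Suc]) auto
  ultimately have "bij_betw ((\<lambda>i. xs ! i) \<circ> (\<lambda>x. x - 1)) {1..n} {1..n}"
    by (rule bij_betw_trans[rotated])
  then have "bij_betw (\<lambda>x. if x \<in> {1..n} then xs ! (x - 1) else x) {1..n} {1..n}"
    by (rule bij_betw_cong[THEN iffD1, rotated]) simp
  then show ?thesis
    by (rule bij_imp_permutes) auto
qed

lemma dcount_eq_card_arrangements: "dcount I n = card (arrangements {1..n} I)"
proof -
  let ?P = "{\<pi>. \<pi> permutes {1..n} \<and> descent_set n \<pi> = I}"
  let ?list = "\<lambda>\<pi>. map \<pi> [1..<Suc n]"
  let ?perm = "\<lambda>xs x. if x \<in> {1..n} then xs ! (x - 1) else x"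
  show ?thesis
    unfolding dcount_def
  proof (rule bij_betw_same_card[of ?list], rule bij_betw_byWitness[where f' = ?perm])
    show "\<forall>\<pi>\<in>?P. ?perm (?list \<pi>) = \<pi>"
    proof (intro ballI ext)
      fix \<pi> x assume "\<pi> \<in> ?P"
      then show "?perm (?list \<pi>) x = \<pi> x"
        using permutes_not_in[of \<pi> "{1..n}" x] by (auto simp del: upt_Suc)
    qed
    show list_perm: "\<forall>xs\<in>arrangements {1..n} I. ?list (?perm xs) = xs"
      by (auto simp: length_arrangements simp del: upt_Suc intro!: nth_equalityI)
    show "?list ` ?P \<subseteq> arrangements {1..n} I"
    proof
      fix xs assume "xs \<in> ?list ` ?P"
      then obtain \<pi> where "\<pi> permutes {1..n}" "descent_set n \<pi> = I" "xs = ?list \<pi>"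
        by blast
      then show "xs \<in> arrangements {1..n} I"
        unfolding arrangements_def using descents_map_upt[of \<pi> n]
        by (simp add: distinct_map permutes_inj_on permutes_image atLeastLessThanSuc_atLeastAtMost
            del: upt_Suc)
    qed
    show "?perm ` arrangements {1..n} I \<subseteq> ?P"
    proof
      fix \<pi> assume "\<pi> \<in> ?perm ` arrangements {1..n} I"
      then obtain xs where xs: "xs \<in> arrangements {1..n} I" and \<pi>: "\<pi> = ?perm xs"
        by blast
      have "\<pi> permutes {1..n}"
        unfolding \<pi> using xs by (intro permutes_nth_shift) (auto simp: arrangements_def)
      moreover have "descent_set n \<pi> = I"
        using descents_map_upt[of \<pi> n] list_perm xs by (simp add: \<pi> arrangements_def)
      ultimately show "\<pi> \<in> ?P"
        by simp
    qed
  qed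
qed

lemma dcount_empty: "dcount {} n = 1"
proof -
  have "arrangements {1..n} {} = {sorted_list_of_set {1..n}}"
    by (auto simp: arrangements_def descents_empty_iff_sorted intro: sorted_distinct_set_unique)
  then show ?thesis
    by (simp add: dcount_eq_card_arrangements)
qed

lemma dcount_le_Suc: "dcount D n \<le> dcount D (Suc n)"
proof -
  have "card (arrangements {1..n} D) \<le> card (arrangements {1..Suc n} D)"
  proof (rule card_inj_on_le[of "\<lambda>xs. xs @ [Suc n]"])
    show "inj_on (\<lambda>xs. xs @ [Suc n]) (arrangements {1..n} D)"
      by (auto intro: inj_onI)
    show "(\<lambda>xs. xs @ [Suc n]) ` arrangements {1..n} D \<subseteq> arrangements {1..Suc n} D"
      by (auto simp: arrangements_def descents_append_greater)
  qed (simp add: finite_arrangements)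
  then show ?thesis
    by (simp add: dcount_eq_card_arrangements)
qed

lemma dcount_mono: "n \<le> n' \<Longrightarrow> dcount D n \<le> dcount D n'"
  by (induction n' rule: dec_induct) (auto intro: le_trans dcount_le_Suc)

lemma card_sorted_completions:
  fixes A :: "'a::linorder set"
  assumes "finite A" "m \<le> card A"
  shows "card {xs. distinct xs \<and> set xs = A \<and> P (take m xs) \<and> sorted (drop m xs)}
    = card {ys. distinct ys \<and> length ys = m \<and> set ys \<subseteq> A \<and> P ys}"
proof -
  let ?complete = "\<lambda>ys. ys @ sorted_list_of_set (A - set ys)"
  show ?thesis
  proof (rule sym, rule bij_betw_same_card[of ?complete],
      rule bij_betw_byWitness[where f' = "take m"])
    show "\<forall>ys\<in>{ys. distinct ys \<and> length ys = m \<and> set ys \<subseteq> A \<and> P ys}. take m (?complete ys) = ys"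
      by auto
    show "\<forall>xs\<in>{xs. distinct xs \<and> set xs = A \<and> P (take m xs) \<and> sorted (drop m xs)}.
        ?complete (take m xs) = xs"
    proof
      fix xs assume xs: "xs \<in> {xs. distinct xs \<and> set xs = A \<and> P (take m xs) \<and> sorted (drop m xs)}"
      have "set xs = set (take m xs) \<union> set (drop m xs)"
        by (metis append_take_drop_id set_append)
      then have "set (drop m xs) = A - set (take m xs)"
        using xs set_take_disj_set_drop_if_distinct[of xs m m] by auto
      then have "sorted_list_of_set (A - set (take m xs)) = drop m xs"
        using xs assms(1) by (intro sorted_distinct_set_unique) auto
      then show "?complete (take m xs) = xs"
        by simp
    qed
    show "?complete ` {ys. distinct ys \<and> length ys = m \<and> set ys \<subseteq> A \<and> P ys}
        \<subseteq> {xs. distinct xs \<and> set xs = A \<and> P (take m xs) \<and> sorted (drop m xs)}"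
      using assms(1) by auto
    show "take m ` {xs. distinct xs \<and> set xs = A \<and> P (take m xs) \<and> sorted (drop m xs)}
        \<subseteq> {ys. distinct ys \<and> length ys = m \<and> set ys \<subseteq> A \<and> P ys}"
      using assms(2) by (auto simp: distinct_card dest: in_set_takeD)
  qed
qed

text \<open>Both sides count the arrangements whose first \<open>m\<close> entries have descent set \<open>J\<close> and
  whose remaining entries increase; such an arrangement has descent set \<open>insert m J\<close> or \<open>J\<close>.\<close>
lemma dcount_insert_add_dcount:
  assumes "J \<subseteq> {..<m}" "m \<le> n"
  shows "dcount (insert m J) n + dcount J n = (n choose m) * dcount J m"
proof -
  let ?S = "{xs. distinct xs \<and> set xs = {1..n} \<and> descents (take m xs) = J \<and> sorted (drop m xs)}"
  have "xs \<in> ?S \<longleftrightarrow> xs \<in> arrangements {1..n} (insert m J) \<union> arrangements {1..n} J" for xs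
  proof (cases "distinct xs \<and> set xs = {1..n}")
    case True
    then have "m \<le> length xs"
      using assms(2) distinct_card by fastforce
    with True show ?thesis
      using descents_split[OF assms(1)] by (simp add: arrangements_def)
  qed (auto simp: arrangements_def)
  then have "?S = arrangements {1..n} (insert m J) \<union> arrangements {1..n} J"
    by blast
  moreover have "arrangements {1..n} (insert m J) \<inter> arrangements {1..n} J = {}"
    using assms(1) by (auto simp: arrangements_def)
  ultimately have "card ?S = dcount (insert m J) n + dcount J n"
    by (simp add: dcount_eq_card_arrangements card_Un_disjoint finite_arrangements)
  also have "card ?S = card {ys. distinct ys \<and> length ys = m \<and> set ys \<subseteq> {1..n} \<and> descents ys = J}"
    using assms(2) by (intro card_sorted_completions) auto
  also have "\<dots> = (n choose m) * dcount J m"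
    by (simp add: card_distinct_lists_descents dcount_eq_card_arrangements)
  finally show ?thesis ..
qed

text \<open>Follow an arrangement of an \<open>m\<close>-subset of \<open>{2..n}\<close> with descent set \<open>J\<close> by the
  value \<open>1\<close> and then the remaining values in increasing order.\<close>
lemma dcount_insert_lower_bound:
  assumes "J \<subseteq> {..<m}" "0 < m" "m < n"
  shows "((n - 1) choose m) * dcount J m \<le> dcount (insert m J) n"
proof -
  let ?Y = "{ys. distinct ys \<and> length ys = m \<and> set ys \<subseteq> {2..n} \<and> descents ys = J}"
  let ?extend = "\<lambda>ys. ys @ 1 # sorted_list_of_set ({2..n} - set ys)"
  have "card ?Y \<le> card (arrangements {1..n} (insert m J))"
  proof (rule card_inj_on_le[of ?extend])
    show "inj_on ?extend ?Y"
      by (rule inj_on_inverseI[where g = "take m"]) simp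
    show "?extend ` ?Y \<subseteq> arrangements {1..n} (insert m J)"
    proof
      fix xs assume "xs \<in> ?extend ` ?Y"
      then obtain ys where ys: "ys \<in> ?Y" and xs: "xs = ?extend ys"
        by blast
      have "distinct xs"
        using ys by (auto simp: xs)
      moreover have "set xs = {1..n}"
        using ys assms(3) by (auto simp: xs)
      moreover have "descents xs = insert m J \<or> descents xs = J"
        using ys by (subst descents_split[OF assms(1), symmetric]) (auto simp: xs)
      moreover have "m \<in> descents xs"
      proof -
        have "ys ! (m - 1) \<in> set ys"
          using ys assms(2) by simp
        then have "ys ! (m - 1) \<in> {2..n}"
          using ys by blast
        then show ?thesis
          using ys assms(2) by (auto simp: xs descents_def nth_append)
      qed
      ultimately show "xs \<in> arrangements {1..n} (insert m J)"
        using assms(1) by (auto simp: arrangements_def)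
    qed
  qed (simp add: finite_arrangements)
  moreover have "card ?Y = ((n - 1) choose m) * dcount J m"
    by (simp add: card_distinct_lists_descents dcount_eq_card_arrangements)
  ultimately show ?thesis
    by (simp add: dcount_eq_card_arrangements)
qed

definition binomial_poly :: "nat \<Rightarrow> 'a::field_char_0 poly" where
  "binomial_poly k = smult (inverse (fact k)) (\<Prod>i<k. [:- of_nat i, 1:])"

lemma poly_binomial_poly: "poly (binomial_poly k) x = x gchoose k"
  by (simp add: binomial_poly_def poly_prod gbinomial_prod_rev lessThan_atLeast0 divide_inverse
      mult.commute)

lemma poly_binomial_poly_of_nat: "poly (binomial_poly k) (of_nat n) = of_nat (n choose k)"
  by (simp add: poly_binomial_poly binomial_gbinomial)

lemma poly_binomial_poly_minus_one: "poly (binomial_poly k) (-1) = (-1) ^ k"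
  using gbinomial_minus[of 1 k] by (simp add: poly_binomial_poly flip: binomial_gbinomial)

lemma poly_eqI_of_nat_greater:
  fixes p q :: "'a::{idom, ring_char_0} poly"
  assumes "\<And>n. n > M \<Longrightarrow> poly p (of_nat n) = poly q (of_nat n)"
  shows "p = q"
proof (rule ccontr)
  assume "p \<noteq> q"
  then have "finite {x. poly (p - q) x = 0}"
    by (intro poly_roots_finite) simp
  moreover have "of_nat ` {M<..} \<subseteq> {x. poly (p - q) x = 0}"
    using assms by auto
  ultimately have "finite (of_nat ` {M<..} :: 'a set)"
    by (rule finite_subset[rotated])
  then show False
    using finite_imageD[OF _ inj_on_subset[OF inj_of_nat]] infinite_Ioi by blast
qed

lemma descent_poly_eqI:
  assumes "\<And>n. n \<ge> Max (I \<union> {0}) \<Longrightarrow> poly p (real n) = real (dcount I n)"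
  shows "descent_poly I = p"
  unfolding descent_poly_def
proof (rule the_equality)
  show "\<forall>n > Max (I \<union> {0}). poly p (real n) = real (dcount I n)"
    using assms by simp
  fix q assume "\<forall>n > Max (I \<union> {0}). poly q (real n) = real (dcount I n)"
  then show "q = p"
    using assms by (intro poly_eqI_of_nat_greater[of "Max (I \<union> {0})"]) simp
qed

lemma Max_insert_Un_zero:
  fixes m :: nat
  assumes "finite J" "\<forall>j\<in>J. j < m"
  shows "Max (insert m J \<union> {0}) = m" and "Max (J \<union> {0}) \<le> m"
proof -
  show "Max (insert m J \<union> {0}) = m"
    using assms by (intro Max_eqI) auto
  show "Max (J \<union> {0}) \<le> m"
    using assms by (subst Max_le_iff) auto
qed

lemma poly_dcount_insert_interpolant:
  assumes "\<forall>j\<in>J. j < m" "m \<le> n"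
    and "\<And>n. m \<le> n \<Longrightarrow> poly q (real n) = real (dcount J n)"
  shows "poly (smult (real (dcount J m)) (binomial_poly m) - q) (real n) = real (dcount (insert m J) n)"
proof -
  have "real (dcount (insert m J) n) + real (dcount J n) = real (n choose m) * real (dcount J m)"
    using dcount_insert_add_dcount[of J m n] assms(1,2) by (auto simp flip: of_nat_add of_nat_mult)
  then show ?thesis
    using assms(2,3) by (simp add: poly_binomial_poly_of_nat algebra_simps)
qed

lemma descent_poly_empty: "descent_poly {} = 1"
  by (rule descent_poly_eqI) (simp add: dcount_empty)

lemma poly_descent_poly:
  assumes "finite I" "Max (I \<union> {0}) \<le> n"
  shows "poly (descent_poly I) (real n) = real (dcount I n)"
  using assms
proof (induction I arbitrary: n rule: finite_linorder_max_induct)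
  case empty
  show ?case
    by (simp add: descent_poly_empty dcount_empty)
next
  case (insert m J)
  let ?p = "smult (real (dcount J m)) (binomial_poly m) - descent_poly J"
  have IH: "poly (descent_poly J) (real n) = real (dcount J n)" if "m \<le> n" for n
    using Max_insert_Un_zero(2)[OF insert.hyps] that by (intro insert.IH) (rule le_trans)
  have p: "poly ?p (real n) = real (dcount (insert m J) n)" if "m \<le> n" for n
    using insert.hyps(2) that IH by (rule poly_dcount_insert_interpolant)
  then have "descent_poly (insert m J) = ?p"
    by (intro descent_poly_eqI) (simp only: Max_insert_Un_zero[OF insert.hyps])
  moreover have "m \<le> n"
    using insert.prems unfolding Max_insert_Un_zero(1)[OF insert.hyps] .
  ultimately show ?case
    using p by simp
qed

lemma descent_poly_insert_greater:
  assumes "finite J" "\<forall>j\<in>J. j < m"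
  shows "descent_poly (insert m J) = smult (real (dcount J m)) (binomial_poly m) - descent_poly J"
  using assms Max_insert_Un_zero[OF assms]
  by (intro descent_poly_eqI poly_dcount_insert_interpolant poly_descent_poly) auto

lemma dcount_alternating_bounds:
  assumes "J \<subseteq> {..<m}" "0 < m" "m' < m" "0 \<le> F" "F \<le> real (dcount J (m' + 2))"
  shows "0 \<le> real (dcount J m) - (-1) ^ (m - m') * F \<and>
    real (dcount J m) - (-1) ^ (m - m') * F \<le> real (dcount (insert m J) (m + 2))"
proof -
  define a where "a = dcount J m"
  have upper: "(m + 1) * a \<le> dcount (insert m J) (m + 2)"
    using dcount_insert_lower_bound[OF assms(1,2), of "m + 2"] by (simp add: a_def)
  show ?thesis
  proof (cases "even (m - m')")
    case True
    then have "m' + 2 \<le> m"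
      using assms(3) by presburger
    then have "F \<le> a"
      using assms(5) dcount_mono[of "m' + 2" m J] by (simp add: a_def)
    moreover have "a \<le> dcount (insert m J) (m + 2)"
      using upper le_trans[of a "(m + 1) * a"] by simp
    ultimately show ?thesis
      using True assms(4) by (simp add: a_def)
  next
    case False
    have "dcount (insert m J) (m + 1) + dcount J (m + 1) = (m + 1) * a"
      using dcount_insert_add_dcount[OF assms(1), of "m + 1"] by (simp add: a_def)
    moreover have "a \<le> dcount (insert m J) (m + 1)"
      using dcount_insert_lower_bound[OF assms(1,2), of "m + 1"] by (simp add: a_def)
    ultimately have "dcount J (m + 1) \<le> m * a"
      by simp
    moreover have "dcount J (m' + 2) \<le> dcount J (m + 1)"
      using assms(3) by (intro dcount_mono) simp
    ultimately have "real (dcount J (m' + 2)) \<le> real m * real a"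
      by (simp flip: of_nat_mult)
    then have "real a + F \<le> real (dcount (insert m J) (m + 2))"
    proof -
      have "real ((m + 1) * a) \<le> real (dcount (insert m J) (m + 2))"
        using upper by (simp only: of_nat_le_iff)
      then show ?thesis
        using assms(5) \<open>real (dcount J (m' + 2)) \<le> real m * real a\<close> by (simp add: algebra_simps)
    qed
    then show ?thesis
      using False assms(4) by (simp add: a_def)
  qed
qed

lemma descent_poly_minus_one_bounds:
  assumes "finite I" "0 \<notin> I"
  shows "0 \<le> (-1) ^ Max (I \<union> {0}) * poly (descent_poly I) (-1) \<and>
    (-1) ^ Max (I \<union> {0}) * poly (descent_poly I) (-1) \<le> real (dcount I (Max (I \<union> {0}) + 2))"
  using assms
proof (induction I rule: finite_linorder_max_induct)
  case empty
  show ?case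
    by (simp add: descent_poly_empty dcount_empty)
next
  case (insert m J)
  define m' where "m' = Max (J \<union> {0})"
  define F where "F = (-1) ^ m' * poly (descent_poly J) (-1 :: real)"
  have "m' < m"
    using insert by (auto simp: m'_def intro: Max.boundedI)
  have "(-1) ^ m * poly (descent_poly (insert m J)) (-1) = real (dcount J m) - (-1) ^ (m - m') * F"
  proof -
    let ?q = "poly (descent_poly J) (-1 :: real)"
    have "(-1) ^ m * poly (descent_poly (insert m J)) (-1) = (-1) ^ m * (real (dcount J m) * (-1) ^ m - ?q)"
      by (simp add: descent_poly_insert_greater[OF insert.hyps] poly_binomial_poly_minus_one)
    also have "\<dots> = real (dcount J m) * ((-1) ^ m * (-1) ^ m) - (-1) ^ m * ?q"
      by (simp add: algebra_simps)
    also have "(-1 :: real) ^ m * (-1) ^ m = 1"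
      by (simp flip: power_mult_distrib)
    also have "(-1) ^ m * ?q = (-1) ^ (m - m') * F"
      using \<open>m' < m\<close> by (simp add: F_def flip: power_add)
    finally show ?thesis
      by simp
  qed
  moreover have "0 \<le> F" "F \<le> real (dcount J (m' + 2))"
    using insert.IH insert.prems by (simp_all add: F_def m'_def)
  moreover have "J \<subseteq> {..<m}" "0 < m"
    using insert by auto
  ultimately show ?case
    unfolding Max_insert_Un_zero(1)[OF insert.hyps]
    using dcount_alternating_bounds[of J m m' F] \<open>m' < m\<close> by simp
qed

theorem proposition3p10:
  fixes I :: "nat set"
  assumes "finite I" and "0 \<notin> I"
  defines "m \<equiv> Max (I \<union> {0})"
  shows "(-1) ^ m * poly (descent_poly I) (-1) \<ge> (0::real)"
  using descent_poly_minus_one_bounds[OF assms(1,2)] unfolding m_def by simp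

end
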